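(* Let $r$ be a Hermitian symmetric polynomial in one complex variable $z$ and let $r^*$ be its reflection. Then $r\in\mathcal{Q}(1)$ if and only if $r^*\in\mathcal{Q}(1)$, and $r\in\mathcal{Q}'(1)$ if and only if $r^*\in\mathcal{Q}'(1)$.
   Context: If $r(z,\overline z)=\sum c_{jk}z^j\overline z^k$ has degree $m$ in $z$ (largest $j$ with some $c_{jk}\ne0$), its reflection is the Hermitian symmetric polynomial $r^*(z,\overline z)=|z|^{2m}r(1/z,1/\overline z)$. $\mathcal{Q}(1)$: Hermitian symmetric $r$ with $r=\|F\|^2/\|G\|^2$ for holomorphic polynomial mappings $F,G$, $G\not\equiv0$. $\mathcal{Q}'(1)$: $r$ with $r(z,\overline z)\ge0$ for all $z$ such that there exist a Hermitian symmetric $s\ge0$, not identically $0$, and a holomorphic polynomial mapping $F$ with $rs=\|F\|^2$. *)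

theory Defs
  imports Complex_Main "HOL-Computational_Algebra.Polynomial"
begin

text \<open>A polynomial r(z, conj z) = sum c j k z^j (conj z)^k in one complex variable is
represented by its coefficient function c (finitely supported).\<close>

definition hsym :: "(nat \<Rightarrow> nat \<Rightarrow> complex) \<Rightarrow> bool" where
  "hsym c \<longleftrightarrow> finite {(j, k). c j k \<noteq> 0} \<and> (\<forall>j k. c j k = cnj (c k j))"

definition heval :: "(nat \<Rightarrow> nat \<Rightarrow> complex) \<Rightarrow> complex \<Rightarrow> complex" where
  "heval c z = (\<Sum>(j, k)\<in>{(j, k). c j k \<noteq> 0}. c j k * z ^ j * cnj z ^ k)"

definition zdeg :: "(nat \<Rightarrow> nat \<Rightarrow> complex) \<Rightarrow> nat" where
  "zdeg c = (if \<forall>j k. c j k = 0 then 0 else Max {j. \<exists>k. c j k \<noteq> 0})"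

text \<open>Reflection r*(z, conj z) = |z|^(2m) r(1/z, 1/conj z), written on coefficients.\<close>
definition reflect :: "(nat \<Rightarrow> nat \<Rightarrow> complex) \<Rightarrow> (nat \<Rightarrow> nat \<Rightarrow> complex)" where
  "reflect c = (\<lambda>a b. if a \<le> zdeg c \<and> b \<le> zdeg c then c (zdeg c - a) (zdeg c - b) else 0)"

definition normsq :: "complex poly list \<Rightarrow> complex \<Rightarrow> real" where
  "normsq F z = (\<Sum>f\<leftarrow>F. (cmod (poly f z))\<^sup>2)"

definition inQ1 :: "(nat \<Rightarrow> nat \<Rightarrow> complex) \<Rightarrow> bool" where
  "inQ1 c \<longleftrightarrow> hsym c \<and>
     (\<exists>F G. (\<exists>g\<in>set G. g \<noteq> 0) \<and>
        (\<forall>z. heval c z * of_real (normsq G z) = of_real (normsq F z)))"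

definition inQ1' :: "(nat \<Rightarrow> nat \<Rightarrow> complex) \<Rightarrow> bool" where
  "inQ1' c \<longleftrightarrow> hsym c \<and> (\<forall>z. 0 \<le> Re (heval c z)) \<and>
     (\<exists>s F. hsym s \<and> (\<forall>z. 0 \<le> Re (heval s z)) \<and> (\<exists>z. heval s z \<noteq> 0) \<and>
        (\<forall>z. heval c z * heval s z = of_real (normsq F z)))"

end

theory Submission
  imports Defs
begin

text \<open>For z \<noteq> 0 the reflection satisfies r*(z) = |z|^(2m) r(1/z), and 1/z reflects back, so any
identity r s = ||F||^2 or r ||G||^2 = ||F||^2 for r can be rewritten at 1/z and multiplied by a
suitable power of |z|^2; the powers are absorbed by reflecting the holomorphic polynomials
f \<mapsto> z^e f(1/z) and the Hermitian factor s \<mapsto> s*. This proves the identities on the punctured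
plane, and continuity of both sides extends them (and nonnegativity) to z = 0.\<close>

definition hreflect :: "nat \<Rightarrow> (nat \<Rightarrow> nat \<Rightarrow> complex) \<Rightarrow> nat \<Rightarrow> nat \<Rightarrow> complex" where
  "hreflect n c = (\<lambda>a b. if a \<le> n \<and> b \<le> n then c (n - a) (n - b) else 0)"

definition hdeg_le :: "nat \<Rightarrow> (nat \<Rightarrow> nat \<Rightarrow> complex) \<Rightarrow> bool" where
  "hdeg_le n c \<longleftrightarrow> (\<forall>j k. c j k \<noteq> 0 \<longrightarrow> j \<le> n \<and> k \<le> n)"

definition reflected :: "nat \<Rightarrow> (nat \<Rightarrow> nat \<Rightarrow> complex) \<Rightarrow> (nat \<Rightarrow> nat \<Rightarrow> complex) \<Rightarrow> bool" where
  "reflected m r1 r2 \<longleftrightarrow>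
     (\<forall>z. z \<noteq> 0 \<longrightarrow> heval r1 z = of_real (cmod z ^ (2 * m)) * heval r2 (1 / z))"

definition poly_reflect_at :: "nat \<Rightarrow> complex poly \<Rightarrow> complex poly" where
  "poly_reflect_at e f = monom 1 (e - degree f) * reflect_poly f"

lemma heval_eq_sum_atMost:
  assumes "hdeg_le n c"
  shows "heval c z = (\<Sum>j\<le>n. \<Sum>k\<le>n. c j k * z ^ j * cnj z ^ k)"
proof -
  have "heval c z = (\<Sum>(j, k)\<in>{..n}\<times>{..n}. c j k * z ^ j * cnj z ^ k)"
    unfolding heval_def
    by (rule sum.mono_neutral_left) (use assms in \<open>auto simp: hdeg_le_def\<close>)
  then show ?thesis
    by (simp add: sum.cartesian_product)
qed

lemma hdeg_le_hreflect: "hdeg_le n (hreflect n c)"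
  by (simp add: hdeg_le_def hreflect_def)

lemma hdeg_le_zdeg:
  assumes "hsym c"
  shows "hdeg_le (zdeg c) c"
proof (cases "\<forall>j k. c j k = 0")
  case True
  then show ?thesis by (simp add: hdeg_le_def)
next
  case False
  have sym: "\<And>j k. c j k = cnj (c k j)" and fin: "finite {(j, k). c j k \<noteq> 0}"
    using assms unfolding hsym_def by blast+
  have "{j. \<exists>k. c j k \<noteq> 0} = fst ` {(j, k). c j k \<noteq> 0}" by force
  with fin have fin_rows: "finite {j. \<exists>k. c j k \<noteq> 0}" by simp
  show ?thesis
    unfolding hdeg_le_def
  proof (intro allI impI)
    fix j k
    assume jk: "c j k \<noteq> 0"
    then have "c k j \<noteq> 0"
      using sym[of k j] by auto
    with jk fin_rows show "j \<le> zdeg c \<and> k \<le> zdeg c"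
      using False unfolding zdeg_def by (auto intro: Max_ge)
  qed
qed

lemma hsym_hreflect:
  assumes "hsym c"
  shows "hsym (hreflect n c)"
proof -
  have "{(j, k). hreflect n c j k \<noteq> 0} \<subseteq> {..n} \<times> {..n}"
    by (auto simp: hreflect_def split: if_splits)
  then have "finite {(j, k). hreflect n c j k \<noteq> 0}"
    by (rule finite_subset) auto
  moreover have "hreflect n c j k = cnj (hreflect n c k j)" for j k
  proof -
    have "c (n - j) (n - k) = cnj (c (n - k) (n - j))"
      using assms unfolding hsym_def by blast
    then show ?thesis
      by (simp add: hreflect_def)
  qed
  ultimately show ?thesis
    unfolding hsym_def by blast
qed

lemma of_real_cmod_power_double: "complex_of_real (cmod z ^ (2 * n)) = z ^ n * cnj z ^ n"
proof -
  have "complex_of_real (cmod z ^ (2 * n)) = complex_of_real ((cmod z)\<^sup>2) ^ n"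
    by (simp add: power_mult)
  also have "\<dots> = z ^ n * cnj z ^ n"
    by (simp only: complex_norm_square power_mult_distrib)
  finally show ?thesis .
qed

lemma reflected_hreflect:
  assumes "hdeg_le n c"
  shows "reflected n (hreflect n c) c"
  unfolding reflected_def
proof (intro allI impI)
  fix z :: complex
  assume z: "z \<noteq> 0"
  have "heval (hreflect n c) z = (\<Sum>a\<le>n. \<Sum>b\<le>n. c (n - a) (n - b) * z ^ a * cnj z ^ b)"
    by (subst heval_eq_sum_atMost[OF hdeg_le_hreflect]) (simp add: hreflect_def)
  also have "\<dots> = (\<Sum>j\<le>n. \<Sum>k\<le>n. c j k * z ^ (n - j) * cnj z ^ (n - k))"
    by (rule sum.reindex_bij_witness[where i="\<lambda>i. n - i" and j="\<lambda>i. n - i"], auto,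
        rule sum.reindex_bij_witness[where i="\<lambda>i. n - i" and j="\<lambda>i. n - i"]) auto
  also have "\<dots> = (\<Sum>j\<le>n. \<Sum>k\<le>n. (z ^ n * cnj z ^ n) * (c j k * (1/z) ^ j * cnj (1/z) ^ k))"
    using z by (intro sum.cong refl) (simp add: power_diff power_divide field_simps)
  also have "\<dots> = of_real (cmod z ^ (2 * n)) * heval c (1 / z)"
    by (simp only: of_real_cmod_power_double heval_eq_sum_atMost[OF assms] sum_distrib_left)
  finally show "heval (hreflect n c) z = of_real (cmod z ^ (2 * n)) * heval c (1 / z)" .
qed

lemma reflected_sym:
  assumes "reflected m r1 r2"
  shows "reflected m r2 r1"
  unfolding reflected_def
proof (intro allI impI)
  fix z :: complex
  assume z: "z \<noteq> 0"
  have "heval r1 (1 / z) = of_real (cmod (1 / z) ^ (2 * m)) * heval r2 z"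
    using assms z by (simp add: reflected_def)
  moreover have "complex_of_real (cmod z ^ (2 * m)) * of_real (cmod (1 / z) ^ (2 * m)) = 1"
    using z by (simp add: norm_divide power_divide flip: of_real_mult)
  ultimately show "heval r2 z = of_real (cmod z ^ (2 * m)) * heval r1 (1 / z)"
    by (metis mult.assoc mult_1)
qed

lemma isCont_heval: "isCont (heval c) z"
  unfolding heval_def case_prod_beta by (intro continuous_intros)

lemma isCont_normsq: "isCont (\<lambda>z. complex_of_real (normsq F z)) z"
  by (induction F) (simp_all add: normsq_def continuous_intros)

lemma isCont_eq_off_0:
  fixes f g :: "complex \<Rightarrow> 'a::t2_space"
  assumes "isCont f 0" "isCont g 0" "\<And>z. z \<noteq> 0 \<Longrightarrow> f z = g z"
  shows "f z = g z"
proof (cases "z = 0")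
  case True
  have "g \<midarrow>0\<rightarrow> f 0"
    using assms(1) LIM_equal[of 0 f g] assms(3) by (simp add: isCont_def)
  with assms(2) have "f 0 = g 0"
    using LIM_unique isCont_def by blast
  with True show ?thesis by simp
qed (use assms(3) in blast)

lemma isCont_nonneg_off_0:
  fixes f :: "complex \<Rightarrow> real"
  assumes "isCont f 0" "\<And>z. z \<noteq> 0 \<Longrightarrow> 0 \<le> f z"
  shows "0 \<le> f z"
proof (cases "z = 0")
  case True
  have "\<forall>\<^sub>F z in at 0. 0 \<le> f z"
    using assms(2) by (simp add: eventually_at_filter)
  with assms(1) have "0 \<le> f 0"
    using tendsto_lowerbound[of f "f 0" "at 0"] by (simp add: isCont_def)
  with True show ?thesis by simp
qed (use assms(2) in blast)

lemma isCont_nonzero_off_0: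
  fixes f :: "complex \<Rightarrow> complex"
  assumes "isCont f 0" "f z0 \<noteq> 0"
  obtains z where "z \<noteq> 0" "f z \<noteq> 0"
proof (cases "f 0 = 0")
  case True
  with assms(2) show ?thesis
    using that by (cases "z0 = 0") auto
next
  case False
  have "\<forall>\<^sub>F z in at 0. f z \<noteq> 0"
    using assms(1) False tendsto_imp_eventually_ne by (auto simp: isCont_def)
  moreover have "\<forall>\<^sub>F z in at (0::complex). z \<noteq> 0"
    by (simp add: eventually_at_filter)
  ultimately have "\<forall>\<^sub>F z in at (0::complex). z \<noteq> 0 \<and> f z \<noteq> 0"
    by (rule eventually_conj[rotated])
  from eventually_happens[OF this] show ?thesis
    using that by auto
qed

lemma reflected_nonneg:
  assumes "reflected m r1 r2" "\<forall>z. 0 \<le> Re (heval r2 z)"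
  shows "\<forall>z. 0 \<le> Re (heval r1 z)"
proof
  fix z
  show "0 \<le> Re (heval r1 z)"
    by (rule isCont_nonneg_off_0[of "\<lambda>z. Re (heval r1 z)"])
       (use assms in \<open>simp_all add: reflected_def isCont_heval continuous_intros\<close>)
qed

lemma reflected_nonzero:
  assumes "reflected m r1 r2" "heval r2 z0 \<noteq> 0"
  shows "\<exists>z. heval r1 z \<noteq> 0"
proof -
  obtain z where "z \<noteq> 0" "heval r2 z \<noteq> 0"
    using isCont_nonzero_off_0[OF isCont_heval assms(2)] .
  with assms(1) have "heval r1 (1 / z) \<noteq> 0"
    by (simp add: reflected_def)
  then show ?thesis ..
qed

lemma poly_poly_reflect_at:
  assumes "degree f \<le> e" "z \<noteq> 0"
  shows "poly (poly_reflect_at e f) z = z ^ e * poly f (1 / z)"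
proof -
  have "poly (poly_reflect_at e f) z = z ^ (e - degree f) * (z ^ degree f * poly f (inverse z))"
    using assms by (simp add: poly_reflect_at_def poly_monom poly_reflect_poly_nz)
  also have "\<dots> = z ^ e * poly f (1 / z)"
    using assms by (simp add: mult.assoc[symmetric] power_add[symmetric] inverse_eq_divide)
  finally show ?thesis .
qed

lemma poly_reflect_at_nonzero:
  assumes "f \<noteq> 0"
  shows "poly_reflect_at e f \<noteq> 0"
proof -
  have "reflect_poly f \<noteq> 0"
    using assms by (metis coeff_0_reflect_poly_0_iff coeff_0)
  then show ?thesis
    by (simp add: poly_reflect_at_def)
qed

lemma normsq_poly_reflect_at:
  assumes "\<forall>f\<in>set F. degree f \<le> e" "z \<noteq> 0"
  shows "normsq (map (poly_reflect_at e) F) z = cmod z ^ (2 * e) * normsq F (1 / z)"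
  using assms(1)
proof (induction F)
  case Nil
  then show ?case by (simp add: normsq_def)
next
  case (Cons f F)
  have "(cmod (poly (poly_reflect_at e f) z))\<^sup>2 = cmod z ^ (2 * e) * (cmod (poly f (1 / z)))\<^sup>2"
    using Cons.prems assms(2)
    by (simp add: poly_poly_reflect_at norm_mult norm_power power_mult_distrib
        power_mult[symmetric] mult.commute)
  with Cons show ?case
    by (simp add: normsq_def distrib_left)
qed

lemma inQ1_reflected:
  assumes refl: "reflected m r1 r2" and "hsym r1" and "inQ1 r2"
  shows "inQ1 r1"
proof -
  obtain F G where G: "\<exists>g\<in>set G. g \<noteq> 0"
    and eq: "\<And>z. heval r2 z * of_real (normsq G z) = of_real (normsq F z)"
    using \<open>inQ1 r2\<close> unfolding inQ1_def by blast
  define d where "d = Max (degree ` set F) + Max (degree ` set G)"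
  define e where "e = m + d"
  have degF: "\<forall>f\<in>set F. degree f \<le> e" and degG: "\<forall>g\<in>set G. degree g \<le> d"
    unfolding d_def e_def by (fastforce intro: trans_le_add1 trans_le_add2)+
  define F' where "F' = map (poly_reflect_at e) F"
  define G' where "G' = map (poly_reflect_at d) G"
  have G': "\<exists>g\<in>set G'. g \<noteq> 0"
    using G poly_reflect_at_nonzero unfolding G'_def by auto
  have "heval r1 z * of_real (normsq G' z) = of_real (normsq F' z)" for z
  proof (rule isCont_eq_off_0[of "\<lambda>z. heval r1 z * of_real (normsq G' z)"])
    fix z :: complex
    assume z: "z \<noteq> 0"
    have "heval r1 z * of_real (normsq G' z) =
        of_real (cmod z ^ (2 * m) * cmod z ^ (2 * d)) * (heval r2 (1/z) * of_real (normsq G (1/z)))"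
      using refl z unfolding G'_def reflected_def by (simp add: normsq_poly_reflect_at[OF degG z])
    also have "\<dots> = of_real (cmod z ^ (2 * e) * normsq F (1/z))"
      by (simp only: eq e_def power_add[symmetric] distrib_left[symmetric] of_real_mult)
    also have "\<dots> = of_real (normsq F' z)"
      unfolding F'_def by (simp add: normsq_poly_reflect_at[OF degF z])
    finally show "heval r1 z * of_real (normsq G' z) = of_real (normsq F' z)" .
  qed (simp_all add: isCont_heval isCont_normsq continuous_intros)
  with G' \<open>hsym r1\<close> show ?thesis
    unfolding inQ1_def by blast
qed

lemma inQ1'_reflected:
  assumes refl: "reflected m r1 r2" and "hsym r1" and "inQ1' r2"
  shows "inQ1' r1"
proof -
  obtain s F where "hsym s" and s_nonneg: "\<forall>z. 0 \<le> Re (heval s z)"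
    and s_nonzero: "\<exists>z. heval s z \<noteq> 0"
    and eq: "\<And>z. heval r2 z * heval s z = of_real (normsq F z)"
    and r2_nonneg: "\<forall>z. 0 \<le> Re (heval r2 z)"
    using \<open>inQ1' r2\<close> unfolding inQ1'_def by blast
  define n where "n = zdeg s + Max (degree ` set F)"
  define e where "e = m + n"
  have "hdeg_le n s"
    using hdeg_le_zdeg[OF \<open>hsym s\<close>] unfolding hdeg_le_def n_def by fastforce
  have degF: "\<forall>f\<in>set F. degree f \<le> e"
    unfolding e_def n_def by (auto intro!: trans_le_add2)
  define s' where "s' = hreflect n s"
  define F' where "F' = map (poly_reflect_at e) F"
  have refl_s: "reflected n s' s"
    unfolding s'_def by (rule reflected_hreflect[OF \<open>hdeg_le n s\<close>])
  have "hsym s'"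
    unfolding s'_def by (rule hsym_hreflect[OF \<open>hsym s\<close>])
  moreover have "\<forall>z. 0 \<le> Re (heval s' z)"
    by (rule reflected_nonneg[OF refl_s s_nonneg])
  moreover have "\<exists>z. heval s' z \<noteq> 0"
    using s_nonzero reflected_nonzero[OF refl_s] by blast
  moreover have "heval r1 z * heval s' z = of_real (normsq F' z)" for z
  proof (rule isCont_eq_off_0[of "\<lambda>z. heval r1 z * heval s' z"])
    fix z :: complex
    assume z: "z \<noteq> 0"
    have "heval r1 z * heval s' z =
        of_real (cmod z ^ (2 * m) * cmod z ^ (2 * n)) * (heval r2 (1/z) * heval s (1/z))"
      using refl refl_s z unfolding reflected_def of_real_mult by (simp add: ac_simps)
    also have "\<dots> = of_real (cmod z ^ (2 * e) * normsq F (1/z))"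
      by (simp only: eq e_def power_add[symmetric] distrib_left[symmetric] of_real_mult)
    also have "\<dots> = of_real (normsq F' z)"
      unfolding F'_def by (simp add: normsq_poly_reflect_at[OF degF z])
    finally show "heval r1 z * heval s' z = of_real (normsq F' z)" .
  qed (simp_all add: isCont_heval isCont_normsq continuous_intros)
  moreover have "\<forall>z. 0 \<le> Re (heval r1 z)"
    by (rule reflected_nonneg[OF refl r2_nonneg])
  ultimately show ?thesis
    using \<open>hsym r1\<close> unfolding inQ1'_def by blast
qed

theorem lemma4p1:
  fixes c :: "nat \<Rightarrow> nat \<Rightarrow> complex"
  assumes "hsym c"
  shows "(inQ1 c \<longleftrightarrow> inQ1 (reflect c)) \<and> (inQ1' c \<longleftrightarrow> inQ1' (reflect c))"
proof -
  have reflect: "reflect c = hreflect (zdeg c) c"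
    by (simp add: reflect_def hreflect_def)
  have "hsym (reflect c)"
    unfolding reflect by (rule hsym_hreflect[OF assms])
  moreover have "reflected (zdeg c) (reflect c) c"
    unfolding reflect by (rule reflected_hreflect[OF hdeg_le_zdeg[OF assms]])
  moreover note reflected_sym[OF this]
  ultimately show ?thesis
    using assms inQ1_reflected inQ1'_reflected by blast
qed

end
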